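(* Let $j=\sqrt{-1}$ and let $a,b\in\mathbb{Z}[j]$ with $ab\neq 0$. Define the $3\times 2$ complex matrix $$X=\begin{pmatrix} X_S\\ X_T\end{pmatrix}=\begin{pmatrix} a & b\\ a & -b^*\\ b & a^*\end{pmatrix},$$ where $X_S=(a\ \ b)$ is the first row and $X_T=\begin{pmatrix} a & -b^*\\ b & a^*\end{pmatrix}$ consists of the last two rows. Then $$\det(X^\dagger X)\geq 2 \qquad\text{and}\qquad \det(X_S X_S^\dagger)\,\det(X_T^\dagger X_T)\geq 1.$$
   Context: $c^*$ denotes the complex conjugate of $c\in\mathbb{C}$, and $M^\dagger$ denotes the conjugate transpose of a complex matrix $M$. $\mathbb{Z}[j]$ is the ring of Gaussian integers. *)

theory Defs
  imports "HOL-Analysis.Analysis"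
begin

definition gauss_int :: "complex set" where
  "gauss_int = {z. Re z \<in> \<int> \<and> Im z \<in> \<int>}"

definition ctrans :: "complex ^'n ^'m \<Rightarrow> complex ^'m ^'n" where
  "ctrans M = (\<chi> i j. cnj (M $ j $ i))"

definition Xmat :: "complex \<Rightarrow> complex \<Rightarrow> complex ^2 ^3" where
  "Xmat a b = vector [vector [a, b], vector [a, - cnj b], vector [b, cnj a]]"

definition XS :: "complex \<Rightarrow> complex \<Rightarrow> complex ^2 ^1" where
  "XS a b = vector [vector [a, b]]"

definition XT :: "complex \<Rightarrow> complex \<Rightarrow> complex ^2 ^2" where
  "XT a b = vector [vector [a, - cnj b], vector [b, cnj a]]"

end

theory Submission
  imports Defs
begin

text \<open>Both determinants depend on a and b only through the sum of the squared moduli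
  \<open>n = |a|\<^sup>2 + |b|\<^sup>2\<close>: \<open>det (X\<^sup>\<dagger> X) = 2 n\<^sup>2\<close> and \<open>det (X\<^sub>S X\<^sub>S\<^sup>\<dagger>) det (X\<^sub>T\<^sup>\<dagger> X\<^sub>T) = n\<^sup>3\<close>.
  A nonzero Gaussian integer has squared modulus at least 1, so \<open>n \<ge> 2\<close>.\<close>

lemma gauss_int_norm_ge_1:
  assumes "z \<in> gauss_int" "z \<noteq> 0"
  shows "1 \<le> (cmod z)\<^sup>2"
proof -
  obtain m n :: int where mn: "Re z = m" "Im z = n"
    using assms(1) unfolding gauss_int_def by (auto elim!: Ints_cases)
  have "m \<noteq> 0 \<or> n \<noteq> 0"
    using assms(2) mn complex_eq_iff by force
  then have "1 \<le> m\<^sup>2 + n\<^sup>2"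
    by (metis add_increasing add_increasing2 int_one_le_iff_zero_less zero_le_power2 zero_less_power2)
  then have "1 \<le> real_of_int (m\<^sup>2 + n\<^sup>2)"
    by linarith
  then show ?thesis
    by (simp add: cmod_power2 mn)
qed

lemma det_ctrans_Xmat_mult_Xmat:
  "det (ctrans (Xmat a b) ** Xmat a b) = of_real (2 * ((cmod a)\<^sup>2 + (cmod b)\<^sup>2)\<^sup>2)"
  unfolding det_2 ctrans_def Xmat_def matrix_matrix_mult_def cmod_power2
  by (simp add: sum_2 sum_3 complex_eq_iff power2_eq_square algebra_simps)

lemma det_XS_mult_det_XT:
  "det (XS a b ** ctrans (XS a b)) * det (ctrans (XT a b) ** XT a b)
     = of_real (((cmod a)\<^sup>2 + (cmod b)\<^sup>2) ^ 3)"
  unfolding det_2 det_1 ctrans_def XS_def XT_def matrix_matrix_mult_def cmod_power2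
  by (simp add: sum_1 sum_2 complex_eq_iff power2_eq_square power3_eq_cube algebra_simps)

theorem mainTheorem1:
  fixes a b :: complex
  assumes "a \<in> gauss_int" and "b \<in> gauss_int" and "a * b \<noteq> 0"
  shows "det (ctrans (Xmat a b) ** Xmat a b) \<in> \<real>
         \<and> Re (det (ctrans (Xmat a b) ** Xmat a b)) \<ge> 2
         \<and> det (XS a b ** ctrans (XS a b)) * det (ctrans (XT a b) ** XT a b) \<in> \<real>
         \<and> Re (det (XS a b ** ctrans (XS a b)) * det (ctrans (XT a b) ** XT a b)) \<ge> 1"
proof -
  define n where "n = (cmod a)\<^sup>2 + (cmod b)\<^sup>2"
  have "1 \<le> (cmod a)\<^sup>2" "1 \<le> (cmod b)\<^sup>2"
    using gauss_int_norm_ge_1 assms by auto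
  then have "1 \<le> n"
    unfolding n_def by linarith
  then have "2 \<le> 2 * n\<^sup>2" "1 \<le> n ^ 3"
    by (simp_all add: one_le_power)
  then show ?thesis
    unfolding det_ctrans_Xmat_mult_Xmat det_XS_mult_det_XT n_def[symmetric] by simp
qed

end
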